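(* Every connected graph $G$ of order $n \ge 3$ is an induced subgraph of a locally Dirac graph.
   Context: A graph $H$ is locally Dirac if for every vertex $v \in V(H)$ and every $u \in N(v)$, $\deg_{\langle N(v)\rangle}(u) \ge \deg_H(v)/2$, where $N(v)$ is the open neighbourhood of $v$ and $\langle N(v)\rangle$ the subgraph induced by it (i.e. $\langle N(v)\rangle$ satisfies Dirac's minimum degree condition for every $v$). *)

theory Defs
  imports Main
begin

definition simple_graph :: "'a set \<Rightarrow> 'a set set \<Rightarrow> bool" where
  "simple_graph V E \<longleftrightarrow> finite V \<and> (\<forall>e\<in>E. e \<subseteq> V \<and> card e = 2)"

definition nbhd :: "'a set set \<Rightarrow> 'a \<Rightarrow> 'a set" where
  "nbhd E v = {u. {u, v} \<in> E}"

definition degree :: "'a set set \<Rightarrow> 'a \<Rightarrow> nat" where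
  "degree E v = card (nbhd E v)"

definition induced_degree :: "'a set set \<Rightarrow> 'a set \<Rightarrow> 'a \<Rightarrow> nat" where
  "induced_degree E S u = card (nbhd E u \<inter> S)"

definition locally_dirac :: "'a set \<Rightarrow> 'a set set \<Rightarrow> bool" where
  "locally_dirac V E \<longleftrightarrow>
     (\<forall>v\<in>V. \<forall>u\<in>nbhd E v. 2 * induced_degree E (nbhd E v) u \<ge> degree E v)"

inductive reachable :: "'a set set \<Rightarrow> 'a \<Rightarrow> 'a \<Rightarrow> bool" for E where
  refl: "reachable E x x"
| step: "reachable E x y \<Longrightarrow> {y, z} \<in> E \<Longrightarrow> reachable E x z"

definition connected_graph :: "'a set \<Rightarrow> 'a set set \<Rightarrow> bool" where
  "connected_graph V E \<longleftrightarrow> V \<noteq> {} \<and> (\<forall>x\<in>V. \<forall>y\<in>V. reachable E x y)"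

definition induced_embedding :: "('a \<Rightarrow> 'b) \<Rightarrow> 'a set \<Rightarrow> 'a set set \<Rightarrow> 'b set \<Rightarrow> 'b set set \<Rightarrow> bool" where
  "induced_embedding f V E W F \<longleftrightarrow> inj_on f V \<and> f ` V \<subseteq> W \<and>
     (\<forall>x\<in>V. \<forall>y\<in>V. {x, y} \<in> E \<longleftrightarrow> {f x, f y} \<in> F)"

end

theory Submission
  imports Defs
begin

text \<open>Join the graph with a clique on more vertices than the graph has. A vertex of the graph
then has at most as many old neighbours as clique neighbours, and every clique vertex sees the
whole graph together with the rest of the clique; in each case a neighbour shares at least half
of the neighbourhood.\<close>

definition join_clique :: "'a set set \<Rightarrow> 'a set \<Rightarrow> nat \<Rightarrow> ('a + nat) set set" where
  "join_clique E V k = {{Inl x, Inl y} | x y. {x, y} \<in> E}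
     \<union> {{Inl x, Inr i} | x i. x \<in> V \<and> i < k}
     \<union> {{Inr i, Inr j} | i j. i < k \<and> j < k \<and> i \<noteq> j}"

lemma join_clique_Inl_Inl [simp]: "{Inl x, Inl y} \<in> join_clique E V k \<longleftrightarrow> {x, y} \<in> E"
  unfolding join_clique_def by (auto simp: doubleton_eq_iff insert_commute)

lemma join_clique_Inl_Inr [simp]: "{Inl x, Inr i} \<in> join_clique E V k \<longleftrightarrow> x \<in> V \<and> i < k"
  unfolding join_clique_def by (auto simp: doubleton_eq_iff)

lemma join_clique_Inr_Inl [simp]: "{Inr i, Inl x} \<in> join_clique E V k \<longleftrightarrow> x \<in> V \<and> i < k"
  by (simp add: insert_commute)

lemma join_clique_Inr_Inr [simp]:
  "{Inr i, Inr j} \<in> join_clique E V k \<longleftrightarrow> i < k \<and> j < k \<and> i \<noteq> j"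
  unfolding join_clique_def by (auto simp: doubleton_eq_iff)

lemma nbhd_join_clique_Inl:
  assumes "a \<in> V"
  shows "nbhd (join_clique E V k) (Inl a) = nbhd E a <+> {..<k}"
proof (rule set_eqI)
  fix p show "p \<in> nbhd (join_clique E V k) (Inl a) \<longleftrightarrow> p \<in> nbhd E a <+> {..<k}"
    using assms by (cases p) (auto simp: nbhd_def)
qed

lemma nbhd_join_clique_Inr:
  assumes "i < k"
  shows "nbhd (join_clique E V k) (Inr i) = V <+> ({..<k} - {i})"
proof (rule set_eqI)
  fix p show "p \<in> nbhd (join_clique E V k) (Inr i) \<longleftrightarrow> p \<in> V <+> ({..<k} - {i})"
    using assms by (cases p) (auto simp: nbhd_def)
qed

lemma nbhd_subset_Diff: "simple_graph V E \<Longrightarrow> nbhd E a \<subseteq> V - {a}"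
  unfolding simple_graph_def nbhd_def by (fastforce simp: card_insert_if split: if_splits)

lemma simple_graph_join_clique:
  assumes "simple_graph V E"
  shows "simple_graph (V <+> {..<k}) (join_clique E V k)"
  unfolding simple_graph_def
proof (rule conjI[OF _ ballI])
  show "finite (V <+> {..<k})" using assms by (simp add: simple_graph_def)
next
  fix e assume "e \<in> join_clique E V k"
  then consider x y where "e = {Inl x, Inl y}" "{x, y} \<in> E"
    | x i where "e = {Inl x, Inr i}" "x \<in> V" "i < k"
    | i j where "e = {Inr i, Inr j}" "i < k" "j < k" "i \<noteq> j"
    unfolding join_clique_def by blast
  then show "e \<subseteq> V <+> {..<k} \<and> card e = 2"
  proof cases
    case (1 x y)
    with assms have "{x, y} \<subseteq> V" "card {x, y} = 2" by (auto simp: simple_graph_def)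
    then show ?thesis using 1 by (auto simp: card_insert_if split: if_splits)
  qed auto
qed

lemma card_Plus_Int:
  "finite A \<Longrightarrow> finite B \<Longrightarrow> card ((A <+> B) \<inter> (C <+> D)) = card (A \<inter> C) + card (B \<inter> D)"
proof -
  assume "finite A" "finite B"
  moreover have "(A <+> B) \<inter> (C <+> D) = (A \<inter> C) <+> (B \<inter> D)" by auto
  ultimately show ?thesis by (simp add: card_Plus)
qed

lemma locally_dirac_join_clique:
  assumes "simple_graph V E" and "card V < k" and "3 \<le> card V + k"
  shows "locally_dirac (V <+> {..<k}) (join_clique E V k)"
  unfolding locally_dirac_def
proof (intro ballI)
  let ?F = "join_clique E V k"
  have finV: "finite V" using assms(1) by (simp add: simple_graph_def)
  have nbhdE: "nbhd E a \<subseteq> V - {a}" for a using nbhd_subset_Diff[OF assms(1)] .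
  have finE: "finite (nbhd E a)" for a using nbhdE finV by (meson finite_Diff finite_subset)
  have degE: "card (nbhd E a) < card V" if "a \<in> V" for a
    using nbhdE[of a] that finV by (intro psubset_card_mono) auto
  fix v u assume v: "v \<in> V <+> {..<k}" and u: "u \<in> nbhd ?F v"
  show "degree ?F v \<le> 2 * induced_degree ?F (nbhd ?F v) u"
  proof (cases v)
    case (Inl a)
    then have a: "a \<in> V" using v by auto
    have Nv: "nbhd ?F v = nbhd E a <+> {..<k}" using nbhd_join_clique_Inl[OF a] Inl by simp
    have deg: "degree ?F v = card (nbhd E a) + k"
      by (simp add: degree_def Nv card_Plus finE)
    show ?thesis
    proof (cases u)
      case (Inl b)
      then have "b \<in> V" using u Nv nbhdE by auto
      then have "induced_degree ?F (nbhd ?F v) u = card (nbhd E b \<inter> nbhd E a) + k"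
        using Inl Nv by (simp add: induced_degree_def nbhd_join_clique_Inl card_Plus_Int finE)
      then show ?thesis using deg degE[OF a] assms(2) by simp
    next
      case (Inr i)
      then have i: "i < k" using u Nv by auto
      have "V \<inter> nbhd E a = nbhd E a" "({..<k} - {i}) \<inter> {..<k} = {..<k} - {i}"
        using nbhdE[of a] by auto
      then have "induced_degree ?F (nbhd ?F v) u = card (nbhd E a) + (k - 1)"
        using Inr Nv i finV by (simp add: induced_degree_def nbhd_join_clique_Inr card_Plus_Int)
      moreover have "0 < card V" using a finV card_gt_0_iff by blast
      ultimately show ?thesis using deg assms(2) by simp
    qed
  next
    case (Inr i)
    then have i: "i < k" using v by auto
    have Nv: "nbhd ?F v = V <+> ({..<k} - {i})" using nbhd_join_clique_Inr[OF i] Inr by simp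
    have deg: "degree ?F v = card V + (k - 1)"
      using i by (simp add: degree_def Nv card_Plus finV)
    show ?thesis
    proof (cases u)
      case (Inl b)
      then have b: "b \<in> V" using u Nv by auto
      have "nbhd E b \<inter> V = nbhd E b" "{..<k} \<inter> ({..<k} - {i}) = {..<k} - {i}"
        using nbhdE[of b] by auto
      then have "induced_degree ?F (nbhd ?F v) u = card (nbhd E b) + (k - 1)"
        using Inl Nv b i by (simp add: induced_degree_def nbhd_join_clique_Inl card_Plus_Int finE)
      then show ?thesis using deg assms(2) by simp
    next
      case (Inr j)
      then have j: "j < k" "j \<noteq> i" using u Nv by auto
      have "V \<inter> V = V" "({..<k} - {j}) \<inter> ({..<k} - {i}) = {..<k} - {i} - {j}" by auto
      then have "induced_degree ?F (nbhd ?F v) u = card V + (k - 2)"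
        using Inr Nv i j finV by (simp add: induced_degree_def nbhd_join_clique_Inr card_Plus_Int)
      then show ?thesis using deg assms(3) by simp
    qed
  qed
qed

lemma induced_embedding_Inl_join_clique:
  "induced_embedding Inl V E (V <+> {..<k}) (join_clique E V k)"
  unfolding induced_embedding_def by auto

theorem mainTheorem3:
  fixes V :: "'a set" and E :: "'a set set"
  assumes "simple_graph V E" and "connected_graph V E" and "card V \<ge> 3"
  shows "\<exists>(W :: ('a + nat) set) F f. simple_graph W F \<and> locally_dirac W F \<and>
           induced_embedding f V E W F"
proof -
  let ?k = "card V + 1"
  have "simple_graph (V <+> {..<?k}) (join_clique E V ?k)"
    using assms(1) by (rule simple_graph_join_clique)
  moreover have "locally_dirac (V <+> {..<?k}) (join_clique E V ?k)"
    using assms(1) assms(3) by (intro locally_dirac_join_clique) auto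
  ultimately show ?thesis using induced_embedding_Inl_join_clique by blast
qed

end
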